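(* Let $R$ be an associative ring with identity and $M$ a left $R$-module which is projective in $\sigma[M]$. If $M$ has Krull dimension, then $LgSpec(M)$ is weakly scattered.
   Context: Krull dimension of a module is in the sense of Gordon–Robson (the deviation of its lattice of submodules). $\Lambda^{fi}(M)$ is the set of fully invariant submodules of $M$. For $N,L\leq M$, $N_ML=\sum\{f(N)\mid f\in\mathrm{Hom}_R(M,L)\}$. $LgSpec(M)$ is the set of submodules $P\neq M$ such that for all $N,L\in\Lambda^{fi}(M)$, $N_ML\subseteq P$ implies $N\subseteq P$ or $L\subseteq P$, with the topology whose open sets are $\{P\in LgSpec(M)\mid N\nsubseteq P\}$, $N\in\Lambda^{fi}(M)$. A topological space $S$ is weakly scattered if every non-empty closed subset $F$ contains a point $x$ such that there is an open set $U$ with $x\in U\cap F\subseteq\overline{\{x\}}$. *)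

theory Defs
  imports "HOL-Algebra.Module" "HOL-Analysis.Abstract_Topology"
begin

text \<open>HOL-Algebra's locale module requires a commutative ring, so we define
left modules over an arbitrary ring R (HOL-Algebra's ring: associative, with identity).\<close>

locale lmodule = R?: ring R + M?: abelian_group M
  for R :: "('r, 'c) ring_scheme" and M :: "('r, 'a, 'd) module_scheme" +
  assumes lsmult_closed:
      "\<lbrakk>a \<in> carrier R; x \<in> carrier M\<rbrakk> \<Longrightarrow> a \<odot>\<^bsub>M\<^esub> x \<in> carrier M"
    and lsmult_l_distr:
      "\<lbrakk>a \<in> carrier R; b \<in> carrier R; x \<in> carrier M\<rbrakk> \<Longrightarrow>
       (a \<oplus>\<^bsub>R\<^esub> b) \<odot>\<^bsub>M\<^esub> x = a \<odot>\<^bsub>M\<^esub> x \<oplus>\<^bsub>M\<^esub> b \<odot>\<^bsub>M\<^esub> x"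
    and lsmult_r_distr:
      "\<lbrakk>a \<in> carrier R; x \<in> carrier M; y \<in> carrier M\<rbrakk> \<Longrightarrow>
       a \<odot>\<^bsub>M\<^esub> (x \<oplus>\<^bsub>M\<^esub> y) = a \<odot>\<^bsub>M\<^esub> x \<oplus>\<^bsub>M\<^esub> a \<odot>\<^bsub>M\<^esub> y"
    and lsmult_assoc:
      "\<lbrakk>a \<in> carrier R; b \<in> carrier R; x \<in> carrier M\<rbrakk> \<Longrightarrow>
       (a \<otimes>\<^bsub>R\<^esub> b) \<odot>\<^bsub>M\<^esub> x = a \<odot>\<^bsub>M\<^esub> (b \<odot>\<^bsub>M\<^esub> x)"
    and lsmult_one:
      "x \<in> carrier M \<Longrightarrow> \<one>\<^bsub>R\<^esub> \<odot>\<^bsub>M\<^esub> x = x"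

definition mod_hom :: "('r, 'c) ring_scheme \<Rightarrow> ('r, 'a, 'd) module_scheme
      \<Rightarrow> ('r, 'b, 'e) module_scheme \<Rightarrow> ('a \<Rightarrow> 'b) set" where
  "mod_hom R M N = {f. f \<in> carrier M \<rightarrow> carrier N \<and>
     (\<forall>x\<in>carrier M. \<forall>y\<in>carrier M. f (x \<oplus>\<^bsub>M\<^esub> y) = f x \<oplus>\<^bsub>N\<^esub> f y) \<and>
     (\<forall>r\<in>carrier R. \<forall>x\<in>carrier M. f (r \<odot>\<^bsub>M\<^esub> x) = r \<odot>\<^bsub>N\<^esub> f x)}"

text \<open>Submodule generated by a subset (= sum of submodules when S is a union of submodules).\<close>
definition gen_submodule :: "('r, 'c) ring_scheme \<Rightarrow> ('r, 'a, 'd) module_scheme \<Rightarrow> 'a set \<Rightarrow> 'a set" where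
  "gen_submodule R M S = \<Inter>{H. submodule H R M \<and> S \<subseteq> H}"

definition M_generated :: "('r, 'c) ring_scheme \<Rightarrow> ('r, 'a, 'd) module_scheme
      \<Rightarrow> ('r, 'b, 'e) module_scheme \<Rightarrow> bool" where
  "M_generated R M K \<longleftrightarrow>
     gen_submodule R K (\<Union>{f ` carrier M | f. f \<in> mod_hom R M K}) = carrier K"

text \<open>The modules of \<sigma>[M] are taken with carriers in the type
  ('a + 'r) list, whose cardinality bounds all modules relevant for the lifting
  property.\<close>
definition in_sigma :: "('r, 'c) ring_scheme \<Rightarrow> ('r, 'a, 'd) module_scheme
      \<Rightarrow> ('r, ('a + 'r) list) module \<Rightarrow> bool" where
  "in_sigma R M N \<longleftrightarrow> lmodule R N \<and>
     (\<exists>K :: ('r, ('a + 'r) list) module. lmodule R K \<and> M_generated R M K \<and>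
        (\<exists>\<iota>\<in>mod_hom R N K. inj_on \<iota> (carrier N)))"

definition projective_in_sigma :: "('r, 'c) ring_scheme \<Rightarrow> ('r, 'a, 'd) module_scheme \<Rightarrow> bool" where
  "projective_in_sigma R M \<longleftrightarrow>
     (\<forall>N L. in_sigma R M N \<longrightarrow> in_sigma R M L \<longrightarrow>
        (\<forall>g\<in>mod_hom R N L. g ` carrier N = carrier L \<longrightarrow>
          (\<forall>f\<in>mod_hom R M L. \<exists>h\<in>mod_hom R M N. \<forall>m\<in>carrier M. g (h m) = f m)))"

text \<open>This is the least family of intervals containing the trivial intervals
  and containing [a,b] whenever every descending chain b \<supseteq> x0 \<supseteq> x1 \<supseteq> ... \<supseteq> a
  has all but finitely many factors [x(i+1), x i] in the family (transfinite
  construction of the deviation).\<close>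
inductive has_dev :: "('r, 'c) ring_scheme \<Rightarrow> ('r, 'a, 'd) module_scheme \<Rightarrow> 'a set \<Rightarrow> 'a set \<Rightarrow> bool"
  for R M where
  "\<lbrakk>submodule a R M; submodule b R M; a \<subseteq> b;
    a = b \<or>
    (\<forall>x :: nat \<Rightarrow> 'a set.
       (\<forall>i. submodule (x i) R M \<and> a \<subseteq> x i \<and> x i \<subseteq> b \<and> x (Suc i) \<subseteq> x i) \<longrightarrow>
       (\<exists>n. \<forall>i\<ge>n. has_dev R M (x (Suc i)) (x i)))\<rbrakk>
   \<Longrightarrow> has_dev R M a b"

definition has_krull_dim :: "('r, 'c) ring_scheme \<Rightarrow> ('r, 'a, 'd) module_scheme \<Rightarrow> bool" where
  "has_krull_dim R M \<longleftrightarrow> has_dev R M {\<zero>\<^bsub>M\<^esub>} (carrier M)"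

definition fully_invariant :: "('r, 'c) ring_scheme \<Rightarrow> ('r, 'a, 'd) module_scheme \<Rightarrow> 'a set \<Rightarrow> bool" where
  "fully_invariant R M N \<longleftrightarrow> submodule N R M \<and> (\<forall>f\<in>mod_hom R M M. f ` N \<subseteq> N)"

text \<open>N_M L = \<Sum>{f(N) | f \<in> Hom_R(M,L)}; homomorphisms M \<rightarrow> L are the R-linear
  maps M \<rightarrow> M with image in L.\<close>
definition mprod :: "('r, 'c) ring_scheme \<Rightarrow> ('r, 'a, 'd) module_scheme \<Rightarrow> 'a set \<Rightarrow> 'a set \<Rightarrow> 'a set" where
  "mprod R M N L = gen_submodule R M
     (\<Union>{f ` N | f. f \<in> mod_hom R M M \<and> f ` carrier M \<subseteq> L})"

definition LgSpec :: "('r, 'c) ring_scheme \<Rightarrow> ('r, 'a, 'd) module_scheme \<Rightarrow> 'a set set" where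
  "LgSpec R M = {P. submodule P R M \<and> P \<noteq> carrier M \<and>
     (\<forall>N L. fully_invariant R M N \<longrightarrow> fully_invariant R M L \<longrightarrow>
        mprod R M N L \<subseteq> P \<longrightarrow> N \<subseteq> P \<or> L \<subseteq> P)}"

definition LgSpec_top :: "('r, 'c) ring_scheme \<Rightarrow> ('r, 'a, 'd) module_scheme \<Rightarrow> 'a set topology" where
  "LgSpec_top R M = topology (\<lambda>U. \<exists>N. fully_invariant R M N \<and> U = {P \<in> LgSpec R M. \<not> N \<subseteq> P})"

definition weakly_scattered :: "'a topology \<Rightarrow> bool" where
  "weakly_scattered T \<longleftrightarrow>
     (\<forall>F. closedin T F \<and> F \<noteq> {} \<longrightarrow>
        (\<exists>x\<in>F. \<exists>U. openin T U \<and> x \<in> U \<and> U \<inter> F \<subseteq> T closure_of {x}))"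

end

theory Submission
  imports Defs
begin

text \<open>Suppose a nonempty closed set \<open>V(N\<^sub>0)\<close> of \<open>LgSpec(M)\<close> had no point \<open>x\<close> with a
  neighbourhood inside \<open>cl{x}\<close>. Then its set \<open>X\<close> of minimal points, which exists by Zorn's
  lemma, has the same property. For a fully invariant \<open>N\<close> meeting \<open>X\<close> in a nonempty open set
  \<open>X \<inter> D(N)\<close>, this set cannot be irreducible: otherwise its intersection would be a point of
  \<open>LgSpec(M)\<close> below all of its elements, so by minimality \<open>X \<inter> D(N)\<close> would be a single point
  with a neighbourhood inside its closure. Hence there is a smaller \<open>N' \<subseteq> N\<close> whose open set
  \<open>X \<inter> D(N')\<close> is nonempty and not dense in \<open>X \<inter> D(N)\<close>. Iterating, the submodules
  \<open>a + N\<^sub>i\<close> form a strictly descending chain whose factors again carry such sets of points,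
  so no factor has a deviation; starting from \<open>0 \<subseteq> M\<close> this contradicts the existence of
  the Krull dimension.\<close>

context lmodule begin

lemma submoduleI:
  assumes "H \<subseteq> carrier M" "\<zero>\<^bsub>M\<^esub> \<in> H"
    "\<And>x y. x \<in> H \<Longrightarrow> y \<in> H \<Longrightarrow> x \<oplus>\<^bsub>M\<^esub> y \<in> H"
    "\<And>x. x \<in> H \<Longrightarrow> \<ominus>\<^bsub>M\<^esub> x \<in> H"
    "\<And>a x. a \<in> carrier R \<Longrightarrow> x \<in> H \<Longrightarrow> a \<odot>\<^bsub>M\<^esub> x \<in> H"
  shows "submodule H R M"
  apply (intro submodule.intro subgroup.intro submodule_axioms.intro)
  using assms by (simp_all add: a_inv_def)

lemma submoduleD:
  assumes "submodule H R M"
  shows "H \<subseteq> carrier M" "\<zero>\<^bsub>M\<^esub> \<in> H"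
    "\<And>x y. x \<in> H \<Longrightarrow> y \<in> H \<Longrightarrow> x \<oplus>\<^bsub>M\<^esub> y \<in> H"
    "\<And>x. x \<in> H \<Longrightarrow> \<ominus>\<^bsub>M\<^esub> x \<in> H"
    "\<And>a x. a \<in> carrier R \<Longrightarrow> x \<in> H \<Longrightarrow> a \<odot>\<^bsub>M\<^esub> x \<in> H"
  using subgroup.subset[OF submodule.axioms(1)[OF assms]]
    subgroup.one_closed[OF submodule.axioms(1)[OF assms]]
    subgroup.m_closed[OF submodule.axioms(1)[OF assms]]
    subgroup.m_inv_closed[OF submodule.axioms(1)[OF assms]]
    submodule.smult_closed[OF assms]
  by (auto simp: a_inv_def)

lemma submodule_Inter:
  assumes "\<H> \<noteq> {}" "\<And>H. H \<in> \<H> \<Longrightarrow> submodule H R M"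
  shows "submodule (\<Inter>\<H>) R M"
proof (rule submoduleI)
  show "\<Inter>\<H> \<subseteq> carrier M" using submoduleD(1)[OF assms(2)] assms(1) by blast
qed (use submoduleD(2-5)[OF assms(2)] in blast)+

lemma submodule_Int: "submodule A R M \<Longrightarrow> submodule B R M \<Longrightarrow> submodule (A \<inter> B) R M"
  using submodule_Inter[of "{A, B}"] by auto

lemma submodule_carrier: "submodule (carrier M) R M"
  by (rule submoduleI) (auto simp: lsmult_closed)

lemma lsmult_zero: "a \<in> carrier R \<Longrightarrow> a \<odot>\<^bsub>M\<^esub> \<zero>\<^bsub>M\<^esub> = \<zero>\<^bsub>M\<^esub>"
  by (metis M.add.l_cancel_one M.zero_closed lsmult_closed lsmult_r_distr)

lemma submodule_zero: "submodule {\<zero>\<^bsub>M\<^esub>} R M"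
  by (rule submoduleI) (auto simp: lsmult_zero)

lemma
  assumes "S \<subseteq> carrier M"
  shows gen_submodule_submodule: "submodule (gen_submodule R M S) R M"
    and gen_submodule_subset: "S \<subseteq> gen_submodule R M S"
    and gen_submodule_least: "\<And>H. submodule H R M \<Longrightarrow> S \<subseteq> H \<Longrightarrow> gen_submodule R M S \<subseteq> H"
proof -
  show "submodule (gen_submodule R M S) R M"
    unfolding gen_submodule_def using assms submodule_carrier by (intro submodule_Inter) auto
qed (auto simp: gen_submodule_def)

lemma
  assumes "f \<in> mod_hom R M M"
  shows mod_hom_closed: "\<And>x. x \<in> carrier M \<Longrightarrow> f x \<in> carrier M"
    and mod_hom_add: "\<And>x y. x \<in> carrier M \<Longrightarrow> y \<in> carrier M \<Longrightarrow> f (x \<oplus>\<^bsub>M\<^esub> y) = f x \<oplus>\<^bsub>M\<^esub> f y"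
    and mod_hom_smult: "\<And>a x. a \<in> carrier R \<Longrightarrow> x \<in> carrier M \<Longrightarrow> f (a \<odot>\<^bsub>M\<^esub> x) = a \<odot>\<^bsub>M\<^esub> f x"
  using assms by (auto simp: mod_hom_def)

lemma mod_hom_zero: "f \<in> mod_hom R M M \<Longrightarrow> f \<zero>\<^bsub>M\<^esub> = \<zero>\<^bsub>M\<^esub>"
  by (metis M.add.l_cancel_one M.l_zero M.zero_closed mod_hom_add mod_hom_closed)

lemma mod_hom_minus:
  assumes f: "f \<in> mod_hom R M M" and x: "x \<in> carrier M"
  shows "f (\<ominus>\<^bsub>M\<^esub> x) = \<ominus>\<^bsub>M\<^esub> f x"
proof -
  have "f (\<ominus>\<^bsub>M\<^esub> x) \<oplus>\<^bsub>M\<^esub> f x = \<zero>\<^bsub>M\<^esub>"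
    using mod_hom_add[OF f M.a_inv_closed[OF x] x] mod_hom_zero[OF f] x by (simp add: M.l_neg)
  then show ?thesis
    using M.minus_equality[OF _ mod_hom_closed[OF f x] mod_hom_closed[OF f M.a_inv_closed[OF x]]]
    by simp
qed

abbreviation FI :: "'a set \<Rightarrow> bool" where "FI N \<equiv> fully_invariant R M N"

lemma fully_invariant_submodule: "FI N \<Longrightarrow> submodule N R M"
  by (simp add: fully_invariant_def)

lemma fully_invariant_subset_carrier: "FI N \<Longrightarrow> N \<subseteq> carrier M"
  using fully_invariant_submodule submoduleD(1) by blast

lemma fully_invariant_gen_submodule:
  assumes S: "S \<subseteq> carrier M" and inv: "\<And>f. f \<in> mod_hom R M M \<Longrightarrow> f ` S \<subseteq> S"
  shows "FI (gen_submodule R M S)"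
proof -
  let ?G = "gen_submodule R M S"
  have "f ` ?G \<subseteq> ?G" if f: "f \<in> mod_hom R M M" for f
  proof -
    let ?H = "{x \<in> ?G. f x \<in> ?G}"
    note G = submoduleD[OF gen_submodule_submodule[OF S]]
    have "submodule ?H R M"
    proof (rule submoduleI)
      show "\<zero>\<^bsub>M\<^esub> \<in> ?H" using G(2) mod_hom_zero[OF f] by simp
    qed (use G(1,3-5) mod_hom_add[OF f] mod_hom_minus[OF f] mod_hom_smult[OF f] in \<open>auto simp: subset_iff\<close>)
    moreover have "S \<subseteq> ?H" using gen_submodule_subset[OF S] inv[OF f] by blast
    ultimately show ?thesis using gen_submodule_least[OF S] by blast
  qed
  then show ?thesis using gen_submodule_submodule[OF S] by (simp add: fully_invariant_def)
qed

lemma fully_invariant_Int: "FI A \<Longrightarrow> FI B \<Longrightarrow> FI (A \<inter> B)"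
  unfolding fully_invariant_def using submodule_Int by blast

lemma fully_invariant_zero: "FI {\<zero>\<^bsub>M\<^esub>}"
  unfolding fully_invariant_def using submodule_zero mod_hom_zero by blast

lemma fully_invariant_carrier: "FI (carrier M)"
  unfolding fully_invariant_def using submodule_carrier mod_hom_closed by blast

lemma fully_invariant_Sup:
  assumes "\<And>N. N \<in> \<N> \<Longrightarrow> FI N"
  shows "FI (gen_submodule R M (\<Union>\<N>))"
proof (rule fully_invariant_gen_submodule)
  show "\<Union>\<N> \<subseteq> carrier M" using assms fully_invariant_subset_carrier by blast
  show "f ` \<Union>\<N> \<subseteq> \<Union>\<N>" if "f \<in> mod_hom R M M" for f
    using assms that unfolding fully_invariant_def by blast
qed

lemma fully_invariant_sup: "FI A \<Longrightarrow> FI B \<Longrightarrow> FI (gen_submodule R M (A \<union> B))"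
  using fully_invariant_Sup[of "{A, B}"] by auto

lemma mprod_subset_Int:
  assumes A: "FI A" and B: "submodule B R M"
  shows "mprod R M A B \<subseteq> A \<inter> B"
proof -
  let ?U = "\<Union>{f ` A | f. f \<in> mod_hom R M M \<and> f ` carrier M \<subseteq> B}"
  have "?U \<subseteq> A \<inter> B"
    using A fully_invariant_subset_carrier[OF A] unfolding fully_invariant_def by blast
  then show ?thesis
    unfolding mprod_def using gen_submodule_least submodule_Int[OF fully_invariant_submodule[OF A] B]
    by (meson inf.boundedE order_trans fully_invariant_subset_carrier[OF A])
qed

end

definition LgSpec_open :: "('r, 'c) ring_scheme \<Rightarrow> ('r, 'a, 'd) module_scheme \<Rightarrow> 'a set \<Rightarrow> 'a set set" where
  "LgSpec_open R M N = {P \<in> LgSpec R M. \<not> N \<subseteq> P}"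

definition LgSpec_closed :: "('r, 'c) ring_scheme \<Rightarrow> ('r, 'a, 'd) module_scheme \<Rightarrow> 'a set \<Rightarrow> 'a set set" where
  "LgSpec_closed R M N = {P \<in> LgSpec R M. N \<subseteq> P}"

definition LgSpec_closed_min :: "('r, 'c) ring_scheme \<Rightarrow> ('r, 'a, 'd) module_scheme \<Rightarrow> 'a set \<Rightarrow> 'a set set" where
  "LgSpec_closed_min R M N =
     {P \<in> LgSpec_closed R M N. \<forall>Q \<in> LgSpec_closed R M N. Q \<subseteq> P \<longrightarrow> Q = P}"

context lmodule begin

lemma LgSpecI:
  "submodule P R M \<Longrightarrow> P \<noteq> carrier M \<Longrightarrow>
   (\<And>N L. FI N \<Longrightarrow> FI L \<Longrightarrow> mprod R M N L \<subseteq> P \<Longrightarrow> N \<subseteq> P \<or> L \<subseteq> P) \<Longrightarrow> P \<in> LgSpec R M"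
  by (simp add: LgSpec_def)

lemma LgSpecD:
  assumes "P \<in> LgSpec R M"
  shows "submodule P R M" "P \<subseteq> carrier M" "P \<noteq> carrier M"
  using assms submoduleD(1) by (auto simp: LgSpec_def)

lemma LgSpec_prime:
  "P \<in> LgSpec R M \<Longrightarrow> FI N \<Longrightarrow> FI L \<Longrightarrow> mprod R M N L \<subseteq> P \<Longrightarrow> N \<subseteq> P \<or> L \<subseteq> P"
  by (simp add: LgSpec_def)

lemma LgSpec_Int_not_subset:
  assumes P: "P \<in> LgSpec R M" and A: "FI A" "\<not> A \<subseteq> P" and B: "FI B" "\<not> B \<subseteq> P"
  shows "\<not> A \<inter> B \<subseteq> P"
  using LgSpec_prime[OF P A(1) B(1)] mprod_subset_Int[OF A(1) fully_invariant_submodule[OF B(1)]] A B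
  by blast

lemma Inter_in_LgSpec:
  assumes Y: "Y \<subseteq> LgSpec R M" "Y \<noteq> {}"
    and irred: "\<And>A B P Q. FI A \<Longrightarrow> FI B \<Longrightarrow> P \<in> Y \<Longrightarrow> \<not> A \<subseteq> P \<Longrightarrow> Q \<in> Y \<Longrightarrow> \<not> B \<subseteq> Q \<Longrightarrow>
       \<exists>q\<in>Y. \<not> A \<subseteq> q \<and> \<not> B \<subseteq> q"
  shows "\<Inter>Y \<in> LgSpec R M"
proof (rule LgSpecI)
  show "submodule (\<Inter>Y) R M" using Y LgSpecD(1) by (intro submodule_Inter) auto
  show "\<Inter>Y \<noteq> carrier M" using Y LgSpecD(2,3) by blast
  show "A \<subseteq> \<Inter>Y \<or> B \<subseteq> \<Inter>Y" if "FI A" "FI B" "mprod R M A B \<subseteq> \<Inter>Y" for A B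
    using irred[OF that(1,2)] LgSpec_prime[OF _ that(1,2)] that(3) Y(1) by blast
qed

lemma LgSpec_open_Int:
  "FI A \<Longrightarrow> FI B \<Longrightarrow> LgSpec_open R M (A \<inter> B) = LgSpec_open R M A \<inter> LgSpec_open R M B"
  unfolding LgSpec_open_def using LgSpec_Int_not_subset by blast

lemma LgSpec_open_Sup:
  assumes "\<And>N. N \<in> \<N> \<Longrightarrow> FI N"
  shows "LgSpec_open R M (gen_submodule R M (\<Union>\<N>)) = (\<Union>N\<in>\<N>. LgSpec_open R M N)"
proof -
  have S: "\<Union>\<N> \<subseteq> carrier M" using assms fully_invariant_subset_carrier by blast
  have "gen_submodule R M (\<Union>\<N>) \<subseteq> P \<longleftrightarrow> (\<forall>N\<in>\<N>. N \<subseteq> P)" if "P \<in> LgSpec R M" for P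
    using gen_submodule_subset[OF S] gen_submodule_least[OF S LgSpecD(1)[OF that]] by blast
  then show ?thesis unfolding LgSpec_open_def by blast
qed

lemma istopology_LgSpec: "istopology (\<lambda>U. \<exists>N. FI N \<and> U = LgSpec_open R M N)"
  unfolding istopology_def
proof (intro conjI allI impI)
  fix S T assume "\<exists>N. FI N \<and> S = LgSpec_open R M N" "\<exists>N. FI N \<and> T = LgSpec_open R M N"
  then obtain A B where A: "FI A" "S = LgSpec_open R M A" and B: "FI B" "T = LgSpec_open R M B"
    by blast
  have "S \<inter> T = LgSpec_open R M (A \<inter> B)"
    unfolding A(2) B(2) LgSpec_open_Int[OF A(1) B(1)] ..
  then show "\<exists>N. FI N \<and> S \<inter> T = LgSpec_open R M N"
    using fully_invariant_Int[OF A(1) B(1)] by blast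
next
  fix \<K> assume \<K>: "\<forall>K\<in>\<K>. \<exists>N. FI N \<and> K = LgSpec_open R M N"
  define \<N> where "\<N> = {N. FI N \<and> LgSpec_open R M N \<in> \<K>}"
  have "\<K> = LgSpec_open R M ` \<N>"
  proof
    show "\<K> \<subseteq> LgSpec_open R M ` \<N>"
    proof
      fix K assume "K \<in> \<K>"
      moreover obtain N where "FI N" "K = LgSpec_open R M N" using \<K> \<open>K \<in> \<K>\<close> by blast
      ultimately show "K \<in> LgSpec_open R M ` \<N>" unfolding \<N>_def by blast
    qed
  qed (auto simp: \<N>_def)
  then have "\<Union>\<K> = (\<Union>N\<in>\<N>. LgSpec_open R M N)" by simp
  also have "\<dots> = LgSpec_open R M (gen_submodule R M (\<Union>\<N>))"
    by (rule LgSpec_open_Sup[symmetric]) (simp add: \<N>_def)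
  finally show "\<exists>N. FI N \<and> \<Union>\<K> = LgSpec_open R M N"
    using fully_invariant_Sup[of \<N>] unfolding \<N>_def by blast
qed

lemma openin_LgSpec_top: "openin (LgSpec_top R M) U \<longleftrightarrow> (\<exists>N. FI N \<and> U = LgSpec_open R M N)"
  using topology_inverse'[OF istopology_LgSpec] by (simp add: LgSpec_top_def LgSpec_open_def)

lemma topspace_LgSpec_top: "topspace (LgSpec_top R M) = LgSpec R M"
proof -
  have "LgSpec_open R M (carrier M) = LgSpec R M"
    using LgSpecD(2,3) unfolding LgSpec_open_def by blast
  then show ?thesis
    unfolding topspace_def openin_LgSpec_top using fully_invariant_carrier
    unfolding LgSpec_open_def by blast
qed

lemma closedin_LgSpec_top:
  assumes "closedin (LgSpec_top R M) F"
  obtains N where "FI N" "F = LgSpec_closed R M N"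
proof -
  obtain N where "FI N" "LgSpec R M - F = LgSpec_open R M N"
    using assms by (auto simp: closedin_def topspace_LgSpec_top openin_LgSpec_top)
  moreover have "F \<subseteq> LgSpec R M" using assms closedin_subset topspace_LgSpec_top by metis
  ultimately show ?thesis
    using that unfolding LgSpec_open_def LgSpec_closed_def by blast
qed

lemma closure_of_LgSpec_singleton:
  assumes x: "x \<in> LgSpec R M"
  shows "LgSpec_top R M closure_of {x} = {y \<in> LgSpec R M. \<forall>K. FI K \<longrightarrow> K \<subseteq> x \<longrightarrow> K \<subseteq> y}"
  using x unfolding closure_of_def topspace_LgSpec_top openin_LgSpec_top LgSpec_open_def
  by blast

end

lemma subset_Zorn_Inter:
  assumes "\<A> \<noteq> {}" and ch: "\<And>\<C>. \<C> \<noteq> {} \<Longrightarrow> subset.chain \<A> \<C> \<Longrightarrow> \<Inter>\<C> \<in> \<A>"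
  shows "\<exists>m\<in>\<A>. \<forall>X\<in>\<A>. X \<subseteq> m \<longrightarrow> X = m"
proof -
  have "\<exists>m\<in>uminus ` \<A>. \<forall>X\<in>uminus ` \<A>. m \<subseteq> X \<longrightarrow> X = m"
  proof (rule subset_Zorn_nonempty)
    fix \<C> assume "\<C> \<noteq> {}" "subset.chain (uminus ` \<A>) \<C>"
    then have "\<Inter>(uminus ` \<C>) \<in> \<A>"
      by (intro ch) (auto simp: subset_chain_def)
    moreover have "\<Union>\<C> = - \<Inter>(uminus ` \<C>)" by auto
    ultimately show "\<Union>\<C> \<in> uminus ` \<A>" by (metis image_eqI)
  qed (use assms(1) in blast)
  then show ?thesis
    by (metis (no_types, lifting) compl_le_compl_iff double_complement imageE image_eqI)
qed

context lmodule begin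

lemma LgSpec_closed_min_below:
  assumes P: "P \<in> LgSpec_closed R M N"
  shows "\<exists>m\<in>LgSpec_closed_min R M N. m \<subseteq> P"
proof -
  let ?A = "{Q \<in> LgSpec_closed R M N. Q \<subseteq> P}"
  have "\<exists>m\<in>?A. \<forall>Q\<in>?A. Q \<subseteq> m \<longrightarrow> Q = m"
  proof (rule subset_Zorn_Inter)
    fix \<C> assume C: "\<C> \<noteq> {}" "subset.chain ?A \<C>"
    then have CA: "\<C> \<subseteq> ?A" and total: "\<And>X Y. X \<in> \<C> \<Longrightarrow> Y \<in> \<C> \<Longrightarrow> X \<subseteq> Y \<or> Y \<subseteq> X"
      by (auto simp: subset_chain_def)
    have "\<Inter>\<C> \<in> LgSpec R M"
    proof (rule Inter_in_LgSpec)
      show "\<C> \<subseteq> LgSpec R M" using CA by (auto simp: LgSpec_closed_def)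
      show "\<exists>q\<in>\<C>. \<not> A \<subseteq> q \<and> \<not> B \<subseteq> q"
        if "P1 \<in> \<C>" "\<not> A \<subseteq> P1" "P2 \<in> \<C>" "\<not> B \<subseteq> P2" for A B P1 P2
        using total[OF that(1,3)] that by blast
    qed (fact C(1))
    then show "\<Inter>\<C> \<in> ?A" using CA C(1) by (auto simp: LgSpec_closed_def)
  qed (use P in auto)
  then obtain m where m: "m \<in> LgSpec_closed R M N" "m \<subseteq> P"
    and min: "\<And>Q. Q \<in> LgSpec_closed R M N \<Longrightarrow> Q \<subseteq> m \<Longrightarrow> Q = m"
    by (metis (no_types, lifting) mem_Collect_eq order_trans)
  then show ?thesis unfolding LgSpec_closed_min_def by auto
qed

end

text \<open>Every basic neighbourhood \<open>D(K)\<close> of a point \<open>x \<in> X\<close> contains a point of \<open>X\<close> outside the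
  closure of \<open>x\<close> (cf. \<open>closure_of_LgSpec_singleton\<close>).\<close>

definition nowhere_weakly_isolated :: "('r, 'c) ring_scheme \<Rightarrow> ('r, 'a, 'd) module_scheme \<Rightarrow> 'a set set \<Rightarrow> bool" where
  "nowhere_weakly_isolated R M X \<longleftrightarrow>
     (\<forall>x\<in>X. \<forall>K. fully_invariant R M K \<longrightarrow> \<not> K \<subseteq> x \<longrightarrow>
        (\<exists>y\<in>X. \<not> K \<subseteq> y \<and> (\<exists>L. fully_invariant R M L \<and> L \<subseteq> x \<and> \<not> L \<subseteq> y)))"

text \<open>Such intervals are the witnesses against the Krull dimension: they have no deviation.\<close>

definition bad_interval :: "('r, 'c) ring_scheme \<Rightarrow> ('r, 'a, 'd) module_scheme \<Rightarrow> 'a set \<Rightarrow> 'a set \<Rightarrow> 'a set \<Rightarrow> bool" where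
  "bad_interval R M N\<^sub>0 a b \<longleftrightarrow> fully_invariant R M a \<and> fully_invariant R M b \<and> a \<subseteq> b \<and>
     (\<exists>X. X \<subseteq> LgSpec_closed_min R M N\<^sub>0 \<and> X \<noteq> {} \<and> nowhere_weakly_isolated R M X \<and>
        (\<forall>P\<in>X. a \<subseteq> P \<and> \<not> b \<subseteq> P))"

context lmodule begin

lemma nowhere_weakly_isolated_open_subset:
  assumes X: "X \<subseteq> LgSpec R M" "nowhere_weakly_isolated R M X"
    and Y: "\<And>p. p \<in> Y \<Longrightarrow> p \<in> X \<and> (\<exists>K. FI K \<and> \<not> K \<subseteq> p \<and> (\<forall>q\<in>X. \<not> K \<subseteq> q \<longrightarrow> q \<in> Y))"
  shows "nowhere_weakly_isolated R M Y"
  unfolding nowhere_weakly_isolated_def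
proof (intro ballI allI impI)
  fix p K assume p: "p \<in> Y" and K: "FI K" "\<not> K \<subseteq> p"
  obtain K' where K': "FI K'" "\<not> K' \<subseteq> p" "\<And>q. q \<in> X \<Longrightarrow> \<not> K' \<subseteq> q \<Longrightarrow> q \<in> Y"
    using Y[OF p] by blast
  have pX: "p \<in> X" using Y[OF p] by blast
  have "\<not> K \<inter> K' \<subseteq> p" using LgSpec_Int_not_subset[OF _ K K'(1,2)] pX X(1) by blast
  then obtain y L where "y \<in> X" "\<not> K \<inter> K' \<subseteq> y" "FI L" "L \<subseteq> p" "\<not> L \<subseteq> y"
    using X(2) pX fully_invariant_Int[OF K(1) K'(1)] unfolding nowhere_weakly_isolated_def by blast
  then show "\<exists>y\<in>Y. \<not> K \<subseteq> y \<and> (\<exists>L. FI L \<and> L \<subseteq> p \<and> \<not> L \<subseteq> y)"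
    using K'(3) by blast
qed

text \<open>The open set \<open>X \<inter> D(N)\<close> is reducible: it contains a nonempty open subset \<open>X \<inter> D(N')\<close>
  whose closure misses some point of \<open>X \<inter> D(N)\<close>.\<close>

lemma open_trace_not_dense:
  assumes X: "X \<subseteq> LgSpec_closed_min R M N\<^sub>0" "nowhere_weakly_isolated R M X"
    and N: "FI N" "\<exists>p\<in>X. \<not> N \<subseteq> p"
  shows "\<exists>N'. FI N' \<and> N' \<subseteq> N \<and> (\<exists>p\<in>X. \<not> N' \<subseteq> p) \<and>
     (\<exists>p\<in>X. \<not> N \<subseteq> p \<and> (\<exists>K. FI K \<and> \<not> K \<subseteq> p \<and> (\<forall>q\<in>X. \<not> N' \<subseteq> q \<longrightarrow> K \<subseteq> q)))"
    (is "\<exists>N'. ?good N'")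
proof (rule ccontr)
  assume no_good: "\<nexists>N'. ?good N'"
  have dense: "\<exists>q\<in>X. \<not> N' \<subseteq> q \<and> \<not> K \<subseteq> q"
    if N': "FI N'" "N' \<subseteq> N" "p' \<in> X" "\<not> N' \<subseteq> p'" and p: "p \<in> X" "\<not> N \<subseteq> p"
      and K: "FI K" "\<not> K \<subseteq> p"
    for N' p' p K
  proof (rule ccontr)
    assume "\<not> (\<exists>q\<in>X. \<not> N' \<subseteq> q \<and> \<not> K \<subseteq> q)"
    then have "\<forall>q\<in>X. \<not> N' \<subseteq> q \<longrightarrow> K \<subseteq> q" by blast
    with N' p K have "?good N'" by blast
    with no_good show False by blast
  qed
  have XL: "X \<subseteq> LgSpec R M" and XN0: "\<And>p. p \<in> X \<Longrightarrow> N\<^sub>0 \<subseteq> p"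
    using X(1) by (auto simp: LgSpec_closed_min_def LgSpec_closed_def)
  define Y where "Y = {p \<in> X. \<not> N \<subseteq> p}"
  have "\<Inter>Y \<in> LgSpec R M"
  proof (rule Inter_in_LgSpec)
    show "Y \<subseteq> LgSpec R M" "Y \<noteq> {}" using XL N(2) by (auto simp: Y_def)
    fix A B P Q assume A: "FI A" and B: "FI B"
      and P: "P \<in> Y" "\<not> A \<subseteq> P" and Q: "Q \<in> Y" "\<not> B \<subseteq> Q"
    have "\<not> N \<inter> A \<subseteq> P"
      using LgSpec_Int_not_subset[OF _ N(1) _ A] P XL by (auto simp: Y_def)
    moreover have "P \<in> X" "Q \<in> X" "\<not> N \<subseteq> Q" using P(1) Q(1) by (auto simp: Y_def)
    ultimately obtain q where "q \<in> X" "\<not> N \<inter> A \<subseteq> q" "\<not> B \<subseteq> q"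
      using dense[OF fully_invariant_Int[OF N(1) A] Int_lower1 _ _ _ _ B Q(2)] by blast
    then show "\<exists>q\<in>Y. \<not> A \<subseteq> q \<and> \<not> B \<subseteq> q" by (auto simp: Y_def)
  qed
  then have "\<Inter>Y \<in> LgSpec_closed R M N\<^sub>0"
    using XN0 N(2) by (auto simp: LgSpec_closed_def Y_def)
  moreover have "\<And>p. p \<in> Y \<Longrightarrow> p \<in> LgSpec_closed_min R M N\<^sub>0" using X(1) by (auto simp: Y_def)
  ultimately have single: "p = \<Inter>Y" if "p \<in> Y" for p
    using that Inter_lower[OF that] unfolding LgSpec_closed_min_def by blast
  obtain p where p: "p \<in> X" "\<not> N \<subseteq> p" using N(2) by blast
  then obtain y where "y \<in> X" "\<not> N \<subseteq> y" "y \<noteq> p"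
    using X(2) N(1) unfolding nowhere_weakly_isolated_def by blast
  then show False using single p by (auto simp: Y_def)
qed


lemma bad_interval_step:
  assumes X: "X \<subseteq> LgSpec_closed_min R M N\<^sub>0" "nowhere_weakly_isolated R M X" "\<forall>P\<in>X. a \<subseteq> P"
    and a: "FI a" and N: "FI N" "FI N'" "N' \<subseteq> N"
    and p: "p \<in> X" "\<not> N \<subseteq> p" and K: "FI K" "\<not> K \<subseteq> p" "\<forall>q\<in>X. \<not> N' \<subseteq> q \<longrightarrow> K \<subseteq> q"
  shows "bad_interval R M N\<^sub>0 (gen_submodule R M (a \<union> N')) (gen_submodule R M (a \<union> N))"
proof -
  have XL: "X \<subseteq> LgSpec R M" using X(1) by (auto simp: LgSpec_closed_min_def LgSpec_closed_def)
  have aN: "a \<union> N \<subseteq> carrier M" and aN': "a \<union> N' \<subseteq> carrier M"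
    using a N fully_invariant_subset_carrier by auto
  txt \<open>The points of \<open>X \<inter> D(N)\<close> outside the closure of \<open>X \<inter> D(N')\<close>.\<close>
  define Y where "Y = {p \<in> X. \<not> N \<subseteq> p \<and> (\<exists>K. FI K \<and> \<not> K \<subseteq> p \<and> (\<forall>q\<in>X. \<not> N' \<subseteq> q \<longrightarrow> K \<subseteq> q))}"
  have "nowhere_weakly_isolated R M Y"
  proof (rule nowhere_weakly_isolated_open_subset[OF XL X(2)])
    fix p assume "p \<in> Y"
    then obtain K where p: "p \<in> X" "\<not> N \<subseteq> p" and K: "FI K" "\<not> K \<subseteq> p" "\<forall>q\<in>X. \<not> N' \<subseteq> q \<longrightarrow> K \<subseteq> q"
      unfolding Y_def by blast
    have "\<not> N \<inter> K \<subseteq> p" using LgSpec_Int_not_subset[OF _ N(1) p(2) K(1,2)] p(1) XL by blast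
    moreover have "q \<in> Y" if "q \<in> X" "\<not> N \<inter> K \<subseteq> q" for q
      using that K unfolding Y_def by blast
    ultimately show "p \<in> X \<and> (\<exists>K'. FI K' \<and> \<not> K' \<subseteq> p \<and> (\<forall>q\<in>X. \<not> K' \<subseteq> q \<longrightarrow> q \<in> Y))"
      using p(1) fully_invariant_Int[OF N(1) K(1)] by blast
  qed
  moreover have "p \<in> Y" using p K unfolding Y_def by blast
  moreover have "Y \<subseteq> LgSpec_closed_min R M N\<^sub>0" using X(1) unfolding Y_def by blast
  moreover have "gen_submodule R M (a \<union> N') \<subseteq> P \<and> \<not> gen_submodule R M (a \<union> N) \<subseteq> P"
    if "P \<in> Y" for P
  proof
    have "P \<in> X" "N' \<subseteq> P" "\<not> N \<subseteq> P" using that unfolding Y_def by blast+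
    then show "gen_submodule R M (a \<union> N') \<subseteq> P"
      using gen_submodule_least[OF aN' LgSpecD(1)] X(3) XL by blast
    show "\<not> gen_submodule R M (a \<union> N) \<subseteq> P"
      using \<open>\<not> N \<subseteq> P\<close> gen_submodule_subset[OF aN] by blast
  qed
  moreover have "gen_submodule R M (a \<union> N') \<subseteq> gen_submodule R M (a \<union> N)"
    using N(3) gen_submodule_subset[OF aN]
    by (intro gen_submodule_least[OF aN' gen_submodule_submodule[OF aN]]) blast
  ultimately show ?thesis
    unfolding bad_interval_def using fully_invariant_sup a N(1,2) by (intro conjI exI[of _ Y]) auto
qed

lemma bad_interval_descends:
  assumes "bad_interval R M N\<^sub>0 a b"
  shows "a \<noteq> b \<and> (\<exists>x. (\<forall>i. submodule (x i) R M \<and> a \<subseteq> x i \<and> x i \<subseteq> b \<and> x (Suc i) \<subseteq> x i) \<and>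
           (\<forall>i. bad_interval R M N\<^sub>0 (x (Suc i)) (x i)))"
proof -
  obtain X where a: "FI a" and b: "FI b" "a \<subseteq> b"
    and X: "X \<subseteq> LgSpec_closed_min R M N\<^sub>0" "X \<noteq> {}" "nowhere_weakly_isolated R M X"
    and Xab: "\<forall>P\<in>X. a \<subseteq> P \<and> \<not> b \<subseteq> P"
    using assms unfolding bad_interval_def by blast
  have "a \<noteq> b" using X(2) Xab by auto
  let ?meets = "\<lambda>N. FI N \<and> N \<subseteq> b \<and> (\<exists>p\<in>X. \<not> N \<subseteq> p)"
  let ?shrinks = "\<lambda>N N'. N' \<subseteq> N \<and>
    (\<exists>p\<in>X. \<not> N \<subseteq> p \<and> (\<exists>K. FI K \<and> \<not> K \<subseteq> p \<and> (\<forall>q\<in>X. \<not> N' \<subseteq> q \<longrightarrow> K \<subseteq> q)))"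
  obtain Ns where Ns: "\<And>i. ?meets (Ns i)" "\<And>i. ?shrinks (Ns i) (Ns (Suc i))"
  proof -
    have "\<exists>Ns. \<forall>i. ?meets (Ns i) \<and> ?shrinks (Ns i) (Ns (Suc i))"
    proof (rule dependent_nat_choice)
      show "\<exists>N. ?meets N" using b X(2) Xab by (intro exI[of _ b]) auto
      show "\<exists>N'. ?meets N' \<and> ?shrinks N N'" if "?meets N" for N
      proof -
        from that have N: "FI N" "\<exists>p\<in>X. \<not> N \<subseteq> p" "N \<subseteq> b" by auto
        from open_trace_not_dense[OF X(1,3) N(1,2)] obtain N' where
          "FI N'" "N' \<subseteq> N" "\<exists>p\<in>X. \<not> N' \<subseteq> p"
          "\<exists>p\<in>X. \<not> N \<subseteq> p \<and> (\<exists>K. FI K \<and> \<not> K \<subseteq> p \<and> (\<forall>q\<in>X. \<not> N' \<subseteq> q \<longrightarrow> K \<subseteq> q))"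
          by blast
        with N(3) show ?thesis by (intro exI[of _ N']) auto
      qed
    qed
    then obtain f where f: "\<forall>i. ?meets (f i) \<and> ?shrinks (f i) (f (Suc i))" ..
    show thesis
    proof (rule that)
      show "?meets (f i)" "?shrinks (f i) (f (Suc i))" for i using spec[OF f, of i] by simp_all
    qed
  qed
  define x where "x i = gen_submodule R M (a \<union> Ns i)" for i
  have sum: "a \<union> Ns i \<subseteq> carrier M" for i
    using a Ns(1)[of i] fully_invariant_subset_carrier by auto
  have "submodule (x i) R M \<and> a \<subseteq> x i \<and> x i \<subseteq> b \<and> x (Suc i) \<subseteq> x i" for i
  proof (intro conjI)
    show "submodule (x i) R M" "a \<subseteq> x i"
      unfolding x_def using gen_submodule_submodule[OF sum] gen_submodule_subset[OF sum] by auto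
    show "x i \<subseteq> b"
      unfolding x_def using b(2) Ns(1)[of i]
      by (intro gen_submodule_least[OF sum fully_invariant_submodule[OF b(1)]]) blast
    show "x (Suc i) \<subseteq> x i"
      unfolding x_def using Ns(2)[of i] gen_submodule_subset[OF sum, of i]
      by (intro gen_submodule_least[OF sum gen_submodule_submodule[OF sum]]) blast
  qed
  moreover have "bad_interval R M N\<^sub>0 (x (Suc i)) (x i)" for i
  proof -
    obtain p K where "p \<in> X" "\<not> Ns i \<subseteq> p" "FI K" "\<not> K \<subseteq> p" "\<forall>q\<in>X. \<not> Ns (Suc i) \<subseteq> q \<longrightarrow> K \<subseteq> q"
      using Ns(2)[of i] by blast
    then show ?thesis
      unfolding x_def using Xab Ns(1) Ns(2)[of i]
      by (intro bad_interval_step[OF X(1,3) _ a]) blast+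
  qed
  ultimately show ?thesis using \<open>a \<noteq> b\<close> by blast
qed

end

lemma has_dev_no_bad_descent:
  assumes "has_dev R M a b"
    and descends: "\<And>a b. Bad a b \<Longrightarrow> a \<noteq> b \<and>
      (\<exists>x. (\<forall>i. submodule (x i) R M \<and> a \<subseteq> x i \<and> x i \<subseteq> b \<and> x (Suc i) \<subseteq> x i) \<and>
           (\<forall>i. Bad (x (Suc i)) (x i)))"
  shows "\<not> Bad a b"
  using assms(1)
proof induction
  case (1 a b)
  show ?case
  proof
    assume "Bad a b"
    from descends[OF this] obtain x where "a \<noteq> b"
      and x: "\<forall>i. submodule (x i) R M \<and> a \<subseteq> x i \<and> x i \<subseteq> b \<and> x (Suc i) \<subseteq> x i"
      and bad: "\<forall>i. Bad (x (Suc i)) (x i)"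
      by blast
    from "1.IH" \<open>a \<noteq> b\<close> x
    obtain n where "\<forall>i\<ge>n. has_dev R M (x (Suc i)) (x i) \<and> \<not> Bad (x (Suc i)) (x i)"
      by blast
    then show False using bad by auto
  qed
qed

context lmodule begin

lemma bad_interval_if_not_weakly_scattered:
  assumes "\<not> weakly_scattered (LgSpec_top R M)"
  shows "\<exists>N\<^sub>0. bad_interval R M N\<^sub>0 {\<zero>\<^bsub>M\<^esub>} (carrier M)"
proof -
  obtain F where F: "closedin (LgSpec_top R M) F" "F \<noteq> {}"
    and no_nbhd: "\<And>x U. x \<in> F \<Longrightarrow> openin (LgSpec_top R M) U \<Longrightarrow> x \<in> U \<Longrightarrow>
                   \<not> U \<inter> F \<subseteq> LgSpec_top R M closure_of {x}"
    using assms unfolding weakly_scattered_def by blast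
  obtain N\<^sub>0 where "FI N\<^sub>0" and F_eq: "F = LgSpec_closed R M N\<^sub>0"
    using closedin_LgSpec_top[OF F(1)] .
  let ?X = "LgSpec_closed_min R M N\<^sub>0"
  have XF: "?X \<subseteq> F" and XL: "?X \<subseteq> LgSpec R M"
    unfolding F_eq LgSpec_closed_min_def LgSpec_closed_def by auto
  have "?X \<noteq> {}" using F(2) LgSpec_closed_min_below unfolding F_eq by blast
  moreover have "nowhere_weakly_isolated R M ?X"
    unfolding nowhere_weakly_isolated_def
  proof (intro ballI allI impI)
    fix x K assume x: "x \<in> ?X" and K: "FI K" "\<not> K \<subseteq> x"
    have "x \<in> LgSpec_open R M K" using x XL K(2) unfolding LgSpec_open_def by blast
    moreover have "openin (LgSpec_top R M) (LgSpec_open R M K)"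
      using K(1) openin_LgSpec_top by blast
    ultimately have "\<not> LgSpec_open R M K \<inter> F \<subseteq> LgSpec_top R M closure_of {x}"
      using no_nbhd x XF by blast
    then obtain y where y: "y \<in> LgSpec_open R M K" "y \<in> F" "y \<notin> LgSpec_top R M closure_of {x}"
      by blast
    then obtain L where L: "FI L" "L \<subseteq> x" "\<not> L \<subseteq> y"
      using closure_of_LgSpec_singleton[of x] x XL unfolding LgSpec_open_def by auto
    obtain m where "m \<in> ?X" "m \<subseteq> y"
      using LgSpec_closed_min_below y(2) unfolding F_eq by blast
    then show "\<exists>y\<in>?X. \<not> K \<subseteq> y \<and> (\<exists>L. FI L \<and> L \<subseteq> x \<and> \<not> L \<subseteq> y)"
      using y(1) L unfolding LgSpec_open_def by blast
  qed
  moreover have "{\<zero>\<^bsub>M\<^esub>} \<subseteq> P \<and> \<not> carrier M \<subseteq> P" if "P \<in> ?X" for P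
    using LgSpecD[of P] submoduleD(2)[of P] that XL by auto
  ultimately have "bad_interval R M N\<^sub>0 {\<zero>\<^bsub>M\<^esub>} (carrier M)"
    unfolding bad_interval_def using fully_invariant_zero fully_invariant_carrier
    by (intro conjI exI[of _ ?X]) auto
  then show ?thesis ..
qed

end

theorem corollary4p34:
  fixes R :: "'r ring" and M :: "('r, 'a) module"
  assumes "lmodule R M"
    and "projective_in_sigma R M"
    and "has_krull_dim R M"
  shows "weakly_scattered (LgSpec_top R M)"
proof (rule ccontr)
  interpret lmodule R M by fact
  assume "\<not> weakly_scattered (LgSpec_top R M)"
  then obtain N\<^sub>0 where "bad_interval R M N\<^sub>0 {\<zero>\<^bsub>M\<^esub>} (carrier M)"
    using bad_interval_if_not_weakly_scattered by blast
  moreover have "\<not> bad_interval R M N\<^sub>0 {\<zero>\<^bsub>M\<^esub>} (carrier M)"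
    using assms(3) unfolding has_krull_dim_def
    by (rule has_dev_no_bad_descent) (rule bad_interval_descends)
  ultimately show False by contradiction
qed

end
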